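(* Let $\xi$ be an American option and $(y,\chi)\in\Phi^{\mathrm{bg}}(\xi)$. Then for all $t=0,\ldots,T$, \[ y_t\in\chi^\ast_t\mathcal{Z}^{\mathrm{bd}}_t\ \text{ on }\{\chi^\ast_t>0\},\qquad y_t\in\mathcal{Q}_t\ \text{ on }\{\chi^\ast_t=0\}, \] that is, for each $\mu\in\Omega_t$: if $\chi^\ast_t(\mu)>0$ then $y_t(\mu)\in\chi^\ast_t(\mu)\mathcal{Z}^{\mathrm{bd}\mu}_t$, and if $\chi^\ast_t(\mu)=0$ then $y_t(\mu)\in\mathcal{Q}^\mu_t$.
   Context: Finite filtered probability space $(\Omega,\mathcal{F},\mathbb{P};(\mathcal{F}_t)_{t=0}^T)$, $\mathcal{F}_0$ trivial, $\mathcal{F}_T=2^\Omega$, $\mathbb{P}(\{\omega\})>0$. $\Omega_t$: atoms (nodes) of $\mathcal{F}_t$; $\mathrm{succ}\,\mu=\{\nu\in\Omega_{t+1}:\nu\subseteq\mu\}$. $\mathcal{L}_t$: $\mathcal{F}_t$-measurable $\mathbb{R}^d$-valued random variables (functions on $\Omega_t$). $d$ assets, $\mathcal{F}_t$-measurable exchange rates $\pi^{jk}_t>0$, $\pi^{jj}_t=1$. $\mathcal{K}^\mu_t$: convex cone generated by $e^1,\ldots,e^d$ and $\pi^{jk}_t(\mu)e^j-e^k$; $\mathcal{K}_t=\{x\in\mathcal{L}_t:x(\mu)\in\mathcal{K}^\mu_t\ \forall\mu\}$. Deferred solvency cone $\mathcal{Q}_t$: $z\in\mathcal{L}_t$ for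 which there exist $y_{t+1},\ldots,y_{T+1}$, $y_s\in\mathcal{L}_{s-1}$, $y_{T+1}=0$, with $z-y_{t+1}\in\mathcal{K}_t$, $y_s-y_{s+1}\in\mathcal{K}_s$ ($s>t$); $\mathcal{Q}^\mu_t=\{z(\mu):z\in\mathcal{Q}_t\}$. Trading strategies $\Phi$: $y=(y_t)_{t=0}^{T+1}$, $y_0\in\mathbb{R}^d$, $y_t\in\mathcal{L}_{t-1}$, $y_{T+1}=0$. Mixed stopping times $\mathcal{X}$: adapted $[0,1]$-valued $\chi$ with $\sum_{t=0}^T\chi_t=1$; $\chi^\ast_t=\sum_{s=t}^T\chi_s$. American option: adapted $\mathbb{R}^d$-valued $\xi$. $\Phi^{\mathrm{bg}}(\xi)$: pairs $(y,\chi)\in\Phi\times\mathcal{X}$ with $y_t+\chi_t\xi_t-y_{t+1}\in\mathcal{K}_t$ for each $t=0,\ldots,T$. Construction (nodewise): $\mathcal{U}^{\mathrm{bd}\mu}_t=-\xi_t(\mu)+\mathcal{Q}^\mu_t$; at $T$: $\mathcal{Z}^{\mathrm{bd}\mu}_T=\mathcal{V}^{\mathrm{bd}\mu}_T=\mathcal{W}^{\mathrm{bd}\mu}_T=\mathcal{U}^{\mathrm{bd}\mu}_T$; for $t<T$: $\mathcal{W}^{\mathrm{bd}\mu}_t=\bigcap_{\nu\in\mathrm{succ}\,\mu}\mathcal{Z}^{\mathrm{bd}\nu}_{t+1}$, $\mathcal{V}^{\mathrm{bd}\mu}_t=\mathcal{W}^{\mathrm{bd}\mu}_t+\mathcal{Q}^\mu_t$,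 $\mathcal{Z}^{\mathrm{bd}\mu}_t=\mathrm{conv}\{\mathcal{U}^{\mathrm{bd}\mu}_t,\mathcal{V}^{\mathrm{bd}\mu}_t\}$. Standing assumption: no arbitrage (no $y\in\Phi$ with $y_0=0$, $y_t-y_{t+1}\in\mathcal{K}_t$ for $t<T$ and $y_T-x\in\mathcal{K}_T$ for a nonzero componentwise non-negative $x\in\mathcal{L}_T$). *)

theory Defs
  imports "HOL-Analysis.Analysis"
begin

text \<open>Finite sample space: a finite type 'w. The filtration is given by its atoms:
  atoms t is the partition of the sample space into the atoms (nodes) of F_t.\<close>

definition is_partition :: "'w set set \<Rightarrow> bool" where
  "is_partition A \<longleftrightarrow> {} \<notin> A \<and> \<Union>A = UNIV \<and>
     (\<forall>a\<in>A. \<forall>b\<in>A. a \<noteq> b \<longrightarrow> a \<inter> b = {})"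

definition filtration :: "nat \<Rightarrow> (nat \<Rightarrow> 'w set set) \<Rightarrow> bool" where
  "filtration T atoms \<longleftrightarrow>
     (\<forall>t\<le>T. is_partition (atoms t)) \<and>
     atoms 0 = {UNIV} \<and>
     atoms T = (\<lambda>w. {w}) ` UNIV \<and>
     (\<forall>t<T. \<forall>\<nu>\<in>atoms (Suc t). \<exists>\<mu>\<in>atoms t. \<nu> \<subseteq> \<mu>)"

definition adapted :: "(nat \<Rightarrow> 'w set set) \<Rightarrow> nat \<Rightarrow> ('w \<Rightarrow> 'a) \<Rightarrow> bool" where
  "adapted atoms t X \<longleftrightarrow> (\<forall>\<mu>\<in>atoms t. \<forall>w\<in>\<mu>. \<forall>w'\<in>\<mu>. X w = X w')"

definition succ_nodes :: "(nat \<Rightarrow> 'w set set) \<Rightarrow> nat \<Rightarrow> 'w set \<Rightarrow> 'w set set" where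
  "succ_nodes atoms t \<mu> = {\<nu> \<in> atoms (Suc t). \<nu> \<subseteq> \<mu>}"

text \<open>Value of an F_t-measurable random variable at a node (any representative).\<close>
definition at_node :: "('w \<Rightarrow> 'a) \<Rightarrow> 'w set \<Rightarrow> 'a" where
  "at_node X \<mu> = X (SOME w. w \<in> \<mu>)"

definition exchange_rates ::
  "nat \<Rightarrow> (nat \<Rightarrow> 'w set set) \<Rightarrow> (nat \<Rightarrow> 'w \<Rightarrow> 'd \<Rightarrow> 'd \<Rightarrow> real) \<Rightarrow> bool" where
  "exchange_rates T atoms rate \<longleftrightarrow>
     (\<forall>t\<le>T. adapted atoms t (rate t) \<and>
        (\<forall>w j k. rate t w j k > 0) \<and> (\<forall>w j. rate t w j j = 1))"

definition Kcone :: "(nat \<Rightarrow> 'w \<Rightarrow> 'd::finite \<Rightarrow> 'd \<Rightarrow> real) \<Rightarrow> nat \<Rightarrow> 'w \<Rightarrow> (real^'d) set" where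
  "Kcone rate t w = convex_cone hull
     ({axis j 1 | j. True} \<union> {rate t w j k *\<^sub>R axis j 1 - axis k 1 | j k. True})"

text \<open>x in K_t (x assumed in L_t where relevant).\<close>
definition inK :: "(nat \<Rightarrow> 'w \<Rightarrow> 'd::finite \<Rightarrow> 'd \<Rightarrow> real) \<Rightarrow> nat \<Rightarrow> ('w \<Rightarrow> real^'d) \<Rightarrow> bool" where
  "inK rate t x \<longleftrightarrow> (\<forall>w. x w \<in> Kcone rate t w)"

definition inQ :: "nat \<Rightarrow> (nat \<Rightarrow> 'w set set) \<Rightarrow> (nat \<Rightarrow> 'w \<Rightarrow> 'd::finite \<Rightarrow> 'd \<Rightarrow> real)
    \<Rightarrow> nat \<Rightarrow> ('w \<Rightarrow> real^'d) \<Rightarrow> bool" where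
  "inQ T atoms rate t z \<longleftrightarrow> adapted atoms t z \<and>
     (\<exists>y :: nat \<Rightarrow> 'w \<Rightarrow> real^'d.
        (\<forall>s\<in>{Suc t..Suc T}. adapted atoms (s - 1) (y s)) \<and>
        y (Suc T) = (\<lambda>_. 0) \<and>
        inK rate t (\<lambda>w. z w - y (Suc t) w) \<and>
        (\<forall>s\<in>{Suc t..T}. inK rate s (\<lambda>w. y s w - y (Suc s) w)))"

definition Qnode :: "nat \<Rightarrow> (nat \<Rightarrow> 'w set set) \<Rightarrow> (nat \<Rightarrow> 'w \<Rightarrow> 'd::finite \<Rightarrow> 'd \<Rightarrow> real)
    \<Rightarrow> nat \<Rightarrow> 'w set \<Rightarrow> (real^'d) set" where
  "Qnode T atoms rate t \<mu> = {at_node z \<mu> | z. inQ T atoms rate t z}"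

definition trading_strategy :: "nat \<Rightarrow> (nat \<Rightarrow> 'w set set) \<Rightarrow> (nat \<Rightarrow> 'w \<Rightarrow> real^'d::finite) \<Rightarrow> bool" where
  "trading_strategy T atoms y \<longleftrightarrow>
     (\<exists>c. y 0 = (\<lambda>_. c)) \<and>
     (\<forall>t\<in>{1..T}. adapted atoms (t - 1) (y t)) \<and>
     y (Suc T) = (\<lambda>_. 0)"

definition no_arbitrage :: "nat \<Rightarrow> (nat \<Rightarrow> 'w set set) \<Rightarrow> (nat \<Rightarrow> 'w \<Rightarrow> 'd::finite \<Rightarrow> 'd \<Rightarrow> real) \<Rightarrow> bool" where
  "no_arbitrage T atoms rate \<longleftrightarrow>
     \<not> (\<exists>y x. trading_strategy T atoms y \<and> y 0 = (\<lambda>_. 0) \<and>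
          (\<forall>t<T. inK rate t (\<lambda>w. y t w - y (Suc t) w)) \<and>
          adapted atoms T x \<and> (\<forall>w i. x w $ i \<ge> 0) \<and> x \<noteq> (\<lambda>_. 0) \<and>
          inK rate T (\<lambda>w. y T w - x w))"

definition mixed_stopping_time :: "nat \<Rightarrow> (nat \<Rightarrow> 'w set set) \<Rightarrow> (nat \<Rightarrow> 'w \<Rightarrow> real) \<Rightarrow> bool" where
  "mixed_stopping_time T atoms ch \<longleftrightarrow>
     (\<forall>t\<le>T. adapted atoms t (ch t) \<and> (\<forall>w. 0 \<le> ch t w \<and> ch t w \<le> 1)) \<and>
     (\<forall>w. (\<Sum>t\<le>T. ch t w) = 1)"

definition chi_star :: "nat \<Rightarrow> (nat \<Rightarrow> 'w \<Rightarrow> real) \<Rightarrow> nat \<Rightarrow> 'w \<Rightarrow> real" where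
  "chi_star T ch t w = (\<Sum>s\<in>{t..T}. ch s w)"

definition american_option :: "nat \<Rightarrow> (nat \<Rightarrow> 'w set set) \<Rightarrow> (nat \<Rightarrow> 'w \<Rightarrow> real^'d::finite) \<Rightarrow> bool" where
  "american_option T atoms \<xi> \<longleftrightarrow> (\<forall>t\<le>T. adapted atoms t (\<xi> t))"

definition Phi_bg :: "nat \<Rightarrow> (nat \<Rightarrow> 'w set set) \<Rightarrow> (nat \<Rightarrow> 'w \<Rightarrow> 'd::finite \<Rightarrow> 'd \<Rightarrow> real)
    \<Rightarrow> (nat \<Rightarrow> 'w \<Rightarrow> real^'d) \<Rightarrow> (nat \<Rightarrow> 'w \<Rightarrow> real^'d) \<Rightarrow> (nat \<Rightarrow> 'w \<Rightarrow> real) \<Rightarrow> bool" where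
  "Phi_bg T atoms rate \<xi> y ch \<longleftrightarrow>
     trading_strategy T atoms y \<and> mixed_stopping_time T atoms ch \<and>
     (\<forall>t\<le>T. inK rate t (\<lambda>w. y t w + ch t w *\<^sub>R \<xi> t w - y (Suc t) w))"

definition Ubd :: "nat \<Rightarrow> (nat \<Rightarrow> 'w set set) \<Rightarrow> (nat \<Rightarrow> 'w \<Rightarrow> 'd::finite \<Rightarrow> 'd \<Rightarrow> real)
    \<Rightarrow> (nat \<Rightarrow> 'w \<Rightarrow> real^'d) \<Rightarrow> nat \<Rightarrow> 'w set \<Rightarrow> (real^'d) set" where
  "Ubd T atoms rate \<xi> t \<mu> = (\<lambda>q. - at_node (\<xi> t) \<mu> + q) ` Qnode T atoms rate t \<mu>"

text \<open>Zrec n t mu is Z^{bd mu}_t when n = T - t (backward recursion with n steps to go).\<close>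
primrec Zrec :: "nat \<Rightarrow> (nat \<Rightarrow> 'w set set) \<Rightarrow> (nat \<Rightarrow> 'w \<Rightarrow> 'd::finite \<Rightarrow> 'd \<Rightarrow> real)
    \<Rightarrow> (nat \<Rightarrow> 'w \<Rightarrow> real^'d) \<Rightarrow> nat \<Rightarrow> nat \<Rightarrow> 'w set \<Rightarrow> (real^'d) set" where
  "Zrec T atoms rate \<xi> 0 t \<mu> = Ubd T atoms rate \<xi> t \<mu>"
| "Zrec T atoms rate \<xi> (Suc n) t \<mu> =
     (let W = (\<Inter>\<nu>\<in>succ_nodes atoms t \<mu>. Zrec T atoms rate \<xi> n (Suc t) \<nu>);
          V = {a + b | a b. a \<in> W \<and> b \<in> Qnode T atoms rate t \<mu>}
      in convex hull (Ubd T atoms rate \<xi> t \<mu> \<union> V))"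

definition Zbd :: "nat \<Rightarrow> (nat \<Rightarrow> 'w set set) \<Rightarrow> (nat \<Rightarrow> 'w \<Rightarrow> 'd::finite \<Rightarrow> 'd \<Rightarrow> real)
    \<Rightarrow> (nat \<Rightarrow> 'w \<Rightarrow> real^'d) \<Rightarrow> nat \<Rightarrow> 'w set \<Rightarrow> (real^'d) set" where
  "Zbd T atoms rate \<xi> t \<mu> = Zrec T atoms rate \<xi> (T - t) t \<mu>"

end

theory Submission
  imports Defs
begin

text \<open>The constraint defining \<open>\<Phi>\<^sup>b\<^sup>g(\<xi>)\<close> gives \<open>y\<^sub>t = y\<^sub>t\<^sub>+\<^sub>1 + k - \<chi>\<^sub>t \<xi>\<^sub>t\<close> with
  \<open>k \<in> K\<^sub>t\<close>, and \<open>\<chi>\<^sup>*\<^sub>t = \<chi>\<^sub>t + \<chi>\<^sup>*\<^sub>t\<^sub>+\<^sub>1\<close>, where \<open>y\<^sub>t\<^sub>+\<^sub>1\<close> and \<open>\<chi>\<^sup>*\<^sub>t\<^sub>+\<^sub>1\<close> are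
  \<open>F\<^sub>t\<close>-measurable, so the induction hypothesis holds for the same vector at every successor node.
  If \<open>\<chi>\<^sup>*\<^sub>t\<^sub>+\<^sub>1 > 0\<close>, then \<open>y\<^sub>t / \<chi>\<^sup>*\<^sub>t\<close> is the convex combination, with weights
  \<open>\<chi>\<^sub>t\<close> and \<open>\<chi>\<^sup>*\<^sub>t\<^sub>+\<^sub>1\<close>, of \<open>-\<xi>\<^sub>t \<in> U\<^sub>t\<close> and
  \<open>(y\<^sub>t\<^sub>+\<^sub>1 + k) / \<chi>\<^sup>*\<^sub>t\<^sub>+\<^sub>1 \<in> W\<^sub>t + Q\<^sub>t = V\<^sub>t\<close>. If \<open>\<chi>\<^sup>*\<^sub>t\<^sub>+\<^sub>1 = 0\<close>, then
  \<open>y\<^sub>t\<^sub>+\<^sub>1 + k \<in> Q\<^sub>t\<close>, because \<open>K\<^sub>t + (Q\<^sub>t\<^sub>+\<^sub>1 \<inter> L\<^sub>t) \<subseteq> Q\<^sub>t\<close> and membership in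
  \<open>Q\<^sub>t\<^sub>+\<^sub>1\<close> can be checked node by node (liquidating strategies chosen at different nodes
  can be pasted together); hence \<open>y\<^sub>t \<in> Q\<^sub>t - \<chi>\<^sub>t \<xi>\<^sub>t\<close>, which equals \<open>\<chi>\<^sub>t U\<^sub>t \<subseteq> \<chi>\<^sub>t Z\<^sub>t\<close> if
  \<open>\<chi>\<^sub>t > 0\<close> and \<open>Q\<^sub>t\<close> otherwise.\<close>

lemma zero_in_Kcone [simp]: "0 \<in> Kcone rate t w"
  unfolding Kcone_def by (rule convex_cone_hull_contains_0)

lemma Kcone_scaleR: "k \<in> Kcone rate t w \<Longrightarrow> 0 \<le> a \<Longrightarrow> a *\<^sub>R k \<in> Kcone rate t w"
  unfolding Kcone_def by (rule convex_cone_scaleR[OF convex_cone_convex_cone_hull])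

definition liquidating ::
  "nat \<Rightarrow> (nat \<Rightarrow> 'w set set) \<Rightarrow> (nat \<Rightarrow> 'w \<Rightarrow> 'd::finite \<Rightarrow> 'd \<Rightarrow> real)
    \<Rightarrow> nat \<Rightarrow> ('w \<Rightarrow> real^'d) \<Rightarrow> (nat \<Rightarrow> 'w \<Rightarrow> real^'d) \<Rightarrow> bool" where
  "liquidating T atoms rate t z Y \<longleftrightarrow>
     (\<forall>s\<in>{Suc t..Suc T}. adapted atoms (s - 1) (Y s)) \<and>
     Y (Suc T) = (\<lambda>_. 0) \<and>
     inK rate t (\<lambda>w. z w - Y (Suc t) w) \<and>
     (\<forall>s\<in>{Suc t..T}. inK rate s (\<lambda>w. Y s w - Y (Suc s) w))"

lemma inQ_iff_liquidating:
  "inQ T atoms rate t z \<longleftrightarrow> adapted atoms t z \<and> (\<exists>Y. liquidating T atoms rate t z Y)"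
  unfolding inQ_def liquidating_def ..

lemma inQ_scaleR:
  assumes "inQ T atoms rate t z" "0 \<le> a"
  shows "inQ T atoms rate t (\<lambda>w. a *\<^sub>R z w)"
proof -
  from assms(1) obtain Y where z: "adapted atoms t z" and Y: "liquidating T atoms rate t z Y"
    unfolding inQ_iff_liquidating by blast
  have scale_K: "inK rate s (\<lambda>w. a *\<^sub>R f w - a *\<^sub>R g w)" if "inK rate s (\<lambda>w. f w - g w)" for s f g
    using that Kcone_scaleR[OF _ assms(2)] unfolding inK_def by (metis scaleR_right_diff_distrib)
  have "liquidating T atoms rate t (\<lambda>w. a *\<^sub>R z w) (\<lambda>s w. a *\<^sub>R Y s w)"
    using Y unfolding liquidating_def
  proof (intro conjI ballI)
    show "adapted atoms (s - 1) (\<lambda>w. a *\<^sub>R Y s w)" if "s \<in> {Suc t..Suc T}" for s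
      using Y that unfolding liquidating_def adapted_def by metis
  qed (simp_all add: scale_K)
  moreover have "adapted atoms t (\<lambda>w. a *\<^sub>R z w)"
    using z unfolding adapted_def by metis
  ultimately show ?thesis
    unfolding inQ_iff_liquidating by blast
qed

lemma at_node_in_Qnode: "inQ T atoms rate t z \<Longrightarrow> at_node z \<mu> \<in> Qnode T atoms rate t \<mu>"
  unfolding Qnode_def by blast

lemma Qnode_iff: "q \<in> Qnode T atoms rate t \<mu> \<longleftrightarrow> (\<exists>z. inQ T atoms rate t z \<and> at_node z \<mu> = q)"
  unfolding Qnode_def by blast

lemma Qnode_scaleR:
  assumes "q \<in> Qnode T atoms rate t \<mu>" "0 \<le> a"
  shows "a *\<^sub>R q \<in> Qnode T atoms rate t \<mu>"
proof -
  from assms(1) obtain z where z: "inQ T atoms rate t z" "q = at_node z \<mu>"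
    unfolding Qnode_def by blast
  have "a *\<^sub>R q = at_node (\<lambda>w. a *\<^sub>R z w) \<mu>"
    unfolding z(2) at_node_def ..
  moreover have "inQ T atoms rate t (\<lambda>w. a *\<^sub>R z w)"
    using z(1) assms(2) by (rule inQ_scaleR)
  ultimately show ?thesis
    unfolding Qnode_def by blast
qed

lemma at_node_if:
  assumes "w \<in> \<nu>" "\<nu> \<subseteq> \<mu> \<or> \<nu> \<inter> \<mu> = {}"
  shows "at_node (\<lambda>w. if w \<in> \<mu> then a else b) \<nu> = (if w \<in> \<mu> then a else b)"
proof -
  have "(SOME w. w \<in> \<nu>) \<in> \<nu>"
    using assms(1) by (rule someI)
  with assms have "(SOME w. w \<in> \<nu>) \<in> \<mu> \<longleftrightarrow> w \<in> \<mu>"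
    by blast
  then show ?thesis
    unfolding at_node_def by simp
qed

lemma at_node_if_self: "w \<in> \<mu> \<Longrightarrow> at_node (\<lambda>w. if w \<in> \<mu> then a else b) \<mu> = a"
  using at_node_if[of w \<mu> \<mu> a b] by simp

locale market =
  fixes T :: nat
    and atoms :: "nat \<Rightarrow> 'w set set"
    and rate :: "nat \<Rightarrow> 'w \<Rightarrow> 'd::finite \<Rightarrow> 'd \<Rightarrow> real"
  assumes filtration: "filtration T atoms"
    and exchange_rates: "exchange_rates T atoms rate"
begin

abbreviation Q :: "nat \<Rightarrow> 'w set \<Rightarrow> (real^'d) set" where
  "Q \<equiv> Qnode T atoms rate"

lemma partition_atoms: "t \<le> T \<Longrightarrow> is_partition (atoms t)"
  using filtration unfolding filtration_def by simp

lemma at_node_eq: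
  assumes "\<mu> \<in> atoms t" "adapted atoms t X" "w \<in> \<mu>"
  shows "at_node X \<mu> = X w"
proof -
  have "(SOME w. w \<in> \<mu>) \<in> \<mu>"
    using assms(3) by (rule someI)
  then show ?thesis
    using assms unfolding at_node_def adapted_def by blast
qed

lemma atom_nonempty: "t \<le> T \<Longrightarrow> \<mu> \<in> atoms t \<Longrightarrow> \<mu> \<noteq> {}"
  using partition_atoms unfolding is_partition_def by metis

lemma atom_unique:
  assumes "t \<le> T" "\<mu> \<in> atoms t" "\<mu>' \<in> atoms t" "w \<in> \<mu>" "w \<in> \<mu>'"
  shows "\<mu> = \<mu>'"
proof (rule ccontr)
  assume "\<mu> \<noteq> \<mu>'"
  then have "\<mu> \<inter> \<mu>' = {}"
    using partition_atoms[OF assms(1)] assms(2,3) unfolding is_partition_def by simp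
  with assms(4,5) show False
    by blast
qed

lemma atom_exists: "t \<le> T \<Longrightarrow> \<exists>\<mu>\<in>atoms t. w \<in> \<mu>"
  using partition_atoms unfolding is_partition_def by (metis UNIV_I UnionE)

lemma atom_parent: "t < T \<Longrightarrow> \<nu> \<in> atoms (Suc t) \<Longrightarrow> \<exists>\<mu>\<in>atoms t. \<nu> \<subseteq> \<mu>"
  using filtration unfolding filtration_def by simp

lemma atom_refines: "s \<le> t \<Longrightarrow> t \<le> T \<Longrightarrow> \<alpha> \<in> atoms t \<Longrightarrow> \<exists>\<beta>\<in>atoms s. \<alpha> \<subseteq> \<beta>"
proof (induction t arbitrary: \<alpha>)
  case 0
  then show ?case
    by blast
next
  case (Suc t)
  show ?case
  proof (cases "s = Suc t")
    case True
    with Suc.prems(3) show ?thesis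
      by blast
  next
    case False
    then have "s \<le> t" "t < T"
      using Suc.prems by auto
    then obtain \<beta>' where "\<beta>' \<in> atoms t" "\<alpha> \<subseteq> \<beta>'"
      using atom_parent Suc.prems(3) by blast
    moreover obtain \<beta> where "\<beta> \<in> atoms s" "\<beta>' \<subseteq> \<beta>"
      using Suc.IH[OF \<open>s \<le> t\<close> _ \<open>\<beta>' \<in> atoms t\<close>] \<open>t < T\<close> by auto
    ultimately show ?thesis
      by blast
  qed
qed

lemma adapted_mono:
  assumes "s \<le> t" "t \<le> T" "adapted atoms s X"
  shows "adapted atoms t X"
  unfolding adapted_def
proof (intro ballI)
  fix \<alpha> w w' assume "\<alpha> \<in> atoms t" "w \<in> \<alpha>" "w' \<in> \<alpha>"
  moreover obtain \<beta> where "\<beta> \<in> atoms s" "\<alpha> \<subseteq> \<beta>"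
    using atom_refines[OF assms(1,2) \<open>\<alpha> \<in> atoms t\<close>] by blast
  ultimately show "X w = X w'"
    using assms(3) unfolding adapted_def by blast
qed

lemma adapted_if:
  assumes "t \<le> T" "\<mu> \<in> atoms t"
  shows "adapted atoms t (\<lambda>w. if w \<in> \<mu> then a else b)"
  unfolding adapted_def
proof (intro ballI)
  fix \<alpha> w w' assume "\<alpha> \<in> atoms t" "w \<in> \<alpha>" "w' \<in> \<alpha>"
  then have "w \<in> \<mu> \<longleftrightarrow> w' \<in> \<mu>"
    using atom_unique[OF assms(1,2) \<open>\<alpha> \<in> atoms t\<close>] by blast
  then show "(if w \<in> \<mu> then a else b) = (if w' \<in> \<mu> then a else b)"
    by simp
qed

lemma adapted_rate: "t \<le> T \<Longrightarrow> adapted atoms t (rate t)"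
  using exchange_rates unfolding exchange_rates_def by simp

lemma adapted_Kcone:
  assumes "t \<le> T"
  shows "adapted atoms t (Kcone rate t)"
  unfolding adapted_def
proof (intro ballI)
  fix \<mu> w w' assume "\<mu> \<in> atoms t" "w \<in> \<mu>" "w' \<in> \<mu>"
  then have "rate t w = rate t w'"
    using adapted_rate[OF assms] unfolding adapted_def by blast
  then show "Kcone rate t w = Kcone rate t w'"
    unfolding Kcone_def by simp
qed

lemma inK_if:
  assumes "t \<le> T" "\<mu> \<in> atoms t" "w \<in> \<mu>" "k \<in> Kcone rate t w"
  shows "inK rate t (\<lambda>w. if w \<in> \<mu> then k else 0)"
  unfolding inK_def
proof
  fix w'
  have "w' \<in> \<mu> \<Longrightarrow> Kcone rate t w' = Kcone rate t w"
    using adapted_Kcone[OF assms(1)] assms(2,3) unfolding adapted_def by blast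
  then show "(if w' \<in> \<mu> then k else 0) \<in> Kcone rate t w'"
    using assms(4) by simp
qed

lemma Kcone_subset_Qnode:
  assumes "t \<le> T" "\<mu> \<in> atoms t" "w \<in> \<mu>" "k \<in> Kcone rate t w"
  shows "k \<in> Q t \<mu>"
proof -
  let ?z = "\<lambda>w. if w \<in> \<mu> then k else 0"
  have "liquidating T atoms rate t ?z (\<lambda>_ _. 0)"
    using inK_if[OF assms] unfolding liquidating_def adapted_def inK_def by simp
  then have "inQ T atoms rate t ?z"
    unfolding inQ_iff_liquidating using adapted_if[OF assms(1,2), of k 0] by blast
  then show ?thesis
    using at_node_in_Qnode at_node_if_self[OF assms(3)] by metis
qed

lemma zero_in_Qnode:
  assumes "t \<le> T" "\<mu> \<in> atoms t"
  shows "0 \<in> Q t \<mu>"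
proof -
  obtain w where "w \<in> \<mu>"
    using atom_nonempty[OF assms] by blast
  then show ?thesis
    using Kcone_subset_Qnode[OF assms _ zero_in_Kcone] by blast
qed

definition node :: "nat \<Rightarrow> 'w \<Rightarrow> 'w set" where
  "node t w = (THE \<mu>. \<mu> \<in> atoms t \<and> w \<in> \<mu>)"

lemma node_eq:
  assumes "t \<le> T" "\<mu> \<in> atoms t" "w \<in> \<mu>"
  shows "node t w = \<mu>"
  unfolding node_def
proof (rule the_equality)
  show "\<mu>' = \<mu>" if "\<mu>' \<in> atoms t \<and> w \<in> \<mu>'" for \<mu>'
    using atom_unique[OF assms(1)] assms(2,3) that by blast
qed (use assms in simp)

lemma node_in_atoms:
  assumes "t \<le> T"
  shows "node t w \<in> atoms t" "w \<in> node t w"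
proof -
  obtain \<mu> where "\<mu> \<in> atoms t" "w \<in> \<mu>"
    using atom_exists[OF assms] by blast
  then show "node t w \<in> atoms t" "w \<in> node t w"
    using node_eq[OF assms] by simp_all
qed

lemma inQ_paste:
  assumes "s \<le> T" "adapted atoms s Z" "\<And>w. inQ T atoms rate s (Z w)"
  shows "inQ T atoms rate s (\<lambda>w. Z w w)"
proof -
  have "\<forall>z\<in>range Z. \<exists>Y. liquidating T atoms rate s z Y"
    using assms(3) unfolding inQ_iff_liquidating by blast
  \<comment> \<open>choosing the strategy as a function of \<open>Z w\<close> rather than of \<open>w\<close> keeps the pasted strategy adapted\<close>
  then obtain L where "\<forall>z\<in>range Z. liquidating T atoms rate s z (L z)"
    by (blast dest: bchoice)
  then have L: "liquidating T atoms rate s (Z w) (L (Z w))" for w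
    by blast
  define Y where "Y r w = L (Z w) r w" for r w
  have "adapted atoms s (\<lambda>w. Z w w)"
    unfolding adapted_def
  proof (intro ballI)
    fix \<mu> w w' assume \<mu>: "\<mu> \<in> atoms s" "w \<in> \<mu>" "w' \<in> \<mu>"
    have "adapted atoms s (Z w)"
      using assms(3) by (simp add: inQ_iff_liquidating)
    then have "Z w w = Z w w'"
      using \<mu> unfolding adapted_def by blast
    also have "\<dots> = Z w' w'"
      using assms(2) \<mu> unfolding adapted_def by metis
    finally show "Z w w = Z w' w'" .
  qed
  moreover have "adapted atoms (r - 1) (Y r)" if r: "r \<in> {Suc s..Suc T}" for r
    unfolding adapted_def
  proof (intro ballI)
    fix \<alpha> w w' assume \<alpha>: "\<alpha> \<in> atoms (r - 1)" "w \<in> \<alpha>" "w' \<in> \<alpha>"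
    have "adapted atoms (r - 1) (L (Z w) r)"
      using L[of w] r unfolding liquidating_def by blast
    then have "Y r w = L (Z w) r w'"
      using \<alpha> unfolding adapted_def Y_def by blast
    also have "\<dots> = Y r w'"
    proof -
      have "s \<le> r - 1" "r - 1 \<le> T"
        using r by auto
      then have "adapted atoms (r - 1) Z"
        using adapted_mono[OF _ _ assms(2)] by blast
      then show ?thesis
        using \<alpha> unfolding adapted_def Y_def by metis
    qed
    finally show "Y r w = Y r w'" .
  qed
  moreover have "Y (Suc T) = (\<lambda>_. 0)"
    using L unfolding liquidating_def Y_def by (simp add: fun_eq_iff)
  moreover have "inK rate s (\<lambda>w. Z w w - Y (Suc s) w)"
    using L unfolding liquidating_def inK_def Y_def by blast
  moreover have "\<forall>r\<in>{Suc s..T}. inK rate r (\<lambda>w. Y r w - Y (Suc r) w)"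
    using L unfolding liquidating_def inK_def Y_def by blast
  ultimately show ?thesis
    unfolding inQ_iff_liquidating liquidating_def by blast
qed

lemma inQ_from_nodes:
  assumes "s \<le> T" "adapted atoms s z" "\<forall>\<nu>\<in>atoms s. at_node z \<nu> \<in> Q s \<nu>"
  shows "inQ T atoms rate s z"
proof -
  have "\<forall>\<nu>\<in>atoms s. \<exists>z'. inQ T atoms rate s z' \<and> at_node z' \<nu> = at_node z \<nu>"
    using assms(3) unfolding Qnode_iff by blast
  from bchoice[OF this] obtain F where F: "\<forall>\<nu>\<in>atoms s. inQ T atoms rate s (F \<nu>) \<and> at_node (F \<nu>) \<nu> = at_node z \<nu>"
    by blast
  have "adapted atoms s (\<lambda>w. F (node s w))"
    unfolding adapted_def using node_eq[OF assms(1)] by auto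
  moreover have F_inQ: "inQ T atoms rate s (F (node s w))" for w
    using F node_in_atoms[OF assms(1)] by blast
  moreover have "F (node s w) w = z w" for w
  proof -
    note node = node_in_atoms[OF assms(1), of w]
    have "adapted atoms s (F (node s w))"
      using F_inQ by (simp add: inQ_iff_liquidating)
    then have "F (node s w) w = at_node (F (node s w)) (node s w)"
      using at_node_eq[OF node(1) _ node(2)] by metis
    also have "\<dots> = at_node z (node s w)"
      using F node(1) by blast
    also have "\<dots> = z w"
      using at_node_eq[OF node(1) assms(2) node(2)] .
    finally show ?thesis .
  qed
  ultimately show ?thesis
    using inQ_paste[OF assms(1), of "\<lambda>w. F (node s w)"] by simp
qed

lemma inQ_Suc:
  assumes "t < T" "adapted atoms t z" "adapted atoms t y"
    and "inK rate t (\<lambda>w. z w - y w)" "inQ T atoms rate (Suc t) y"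
  shows "inQ T atoms rate t z"
proof -
  obtain Y where Y: "liquidating T atoms rate (Suc t) y Y"
    using assms(5) unfolding inQ_iff_liquidating by blast
  have "liquidating T atoms rate t z (Y(Suc t := y))"
    unfolding liquidating_def
  proof (intro conjI)
    show "\<forall>s\<in>{Suc t..Suc T}. adapted atoms (s - 1) ((Y(Suc t := y)) s)"
      using Y assms(3) unfolding liquidating_def by (auto simp: le_Suc_eq)
    show "(Y(Suc t := y)) (Suc T) = (\<lambda>_. 0)"
      using Y assms(1) unfolding liquidating_def by simp
    show "inK rate t (\<lambda>w. z w - (Y(Suc t := y)) (Suc t) w)"
      using assms(4) by simp
    show "\<forall>s\<in>{Suc t..T}. inK rate s (\<lambda>w. (Y(Suc t := y)) s w - (Y(Suc t := y)) (Suc s) w)"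
      using Y unfolding liquidating_def by (auto simp: le_Suc_eq)
  qed
  then show ?thesis
    using assms(2) unfolding inQ_iff_liquidating by blast
qed

lemma Qnode_add_Kcone:
  assumes "t < T" "\<mu> \<in> atoms t" "w \<in> \<mu>"
    and "\<forall>\<nu>\<in>succ_nodes atoms t \<mu>. x \<in> Q (Suc t) \<nu>" "k \<in> Kcone rate t w"
  shows "x + k \<in> Q t \<mu>"
proof -
  let ?y = "\<lambda>w. if w \<in> \<mu> then x else 0"
  let ?z = "\<lambda>w. if w \<in> \<mu> then x + k else 0"
  have t: "t \<le> T"
    using assms(1) by simp
  have "at_node ?y \<nu> \<in> Q (Suc t) \<nu>" if \<nu>: "\<nu> \<in> atoms (Suc t)" for \<nu>
  proof -
    obtain \<beta> where \<beta>: "\<beta> \<in> atoms t" "\<nu> \<subseteq> \<beta>"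
      using atom_parent[OF assms(1) \<nu>] by blast
    obtain w' where w': "w' \<in> \<nu>"
      using atom_nonempty[OF _ \<nu>] assms(1) by auto
    show ?thesis
    proof (cases "\<beta> = \<mu>")
      case True
      then have "\<nu> \<in> succ_nodes atoms t \<mu>"
        using \<nu> \<beta> by (simp add: succ_nodes_def)
      then show ?thesis
        using assms(4) at_node_if[of w' \<nu> \<mu> x 0] \<beta>(2) True w' by auto
    next
      case False
      then have "\<nu> \<inter> \<mu> = {}"
        using atom_unique[OF t \<beta>(1) assms(2)] \<beta>(2) by blast
      then show ?thesis
        using at_node_if[of w' \<nu> \<mu> x 0] w' zero_in_Qnode[OF _ \<nu>] assms(1) by auto
    qed
  qed
  moreover have "adapted atoms (Suc t) ?y"
    using adapted_mono[OF _ _ adapted_if[OF t assms(2), of x 0]] assms(1) by simp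
  ultimately have "inQ T atoms rate (Suc t) ?y"
    using inQ_from_nodes[of "Suc t" ?y] assms(1) by simp
  moreover have "inK rate t (\<lambda>w. ?z w - ?y w)"
    using inK_if[OF t assms(2,3,5)] by (simp add: if_distrib cong: if_cong)
  ultimately have "inQ T atoms rate t ?z"
    using inQ_Suc[OF assms(1) adapted_if[OF t assms(2)] adapted_if[OF t assms(2)]] by blast
  then show ?thesis
    using at_node_in_Qnode at_node_if_self[OF assms(3)] by metis
qed

lemma adapted_chi_star_Suc:
  assumes "mixed_stopping_time T atoms ch" "t < T"
  shows "adapted atoms t (chi_star T ch (Suc t))"
proof -
  have tail: "chi_star T ch (Suc t) w = 1 - (\<Sum>s\<le>t. ch s w)" for w
  proof -
    have "(\<Sum>s\<le>T. ch s w) = 1"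
      using assms(1) unfolding mixed_stopping_time_def by blast
    moreover have "(\<Sum>s\<le>T. ch s w) = (\<Sum>s\<le>t. ch s w) + chi_star T ch (Suc t) w"
      using sum_up_index_split[of "\<lambda>s. ch s w" t "T - t"] assms(2) by (simp add: chi_star_def)
    ultimately show ?thesis
      by simp
  qed
  have "adapted atoms t (ch s)" if "s \<le> t" for s
  proof (rule adapted_mono[OF that])
    show "adapted atoms s (ch s)"
      using assms that unfolding mixed_stopping_time_def by simp
  qed (use assms(2) in simp)
  then show ?thesis
    unfolding adapted_def
  proof (intro ballI)
    fix \<alpha> w w' assume "\<alpha> \<in> atoms t" "w \<in> \<alpha>" "w' \<in> \<alpha>"
    then have "ch s w = ch s w'" if "s \<in> {..t}" for s
      using \<open>\<And>s. s \<le> t \<Longrightarrow> adapted atoms t (ch s)\<close>[of s] that unfolding adapted_def by blast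
    then show "chi_star T ch (Suc t) w = chi_star T ch (Suc t) w'"
      unfolding tail using sum.cong[OF refl, of "{..t}" "\<lambda>s. ch s w" "\<lambda>s. ch s w'"] by simp
  qed
qed

end

lemma chi_star_Suc: "t < T \<Longrightarrow> chi_star T ch t w = ch t w + chi_star T ch (Suc t) w"
  unfolding chi_star_def by (simp add: sum.atLeast_Suc_atMost)

lemma chi_star_nonneg:
  assumes "mixed_stopping_time T atoms ch"
  shows "0 \<le> chi_star T ch t w"
  unfolding chi_star_def
proof (rule sum_nonneg)
  show "0 \<le> ch s w" if "s \<in> {t..T}" for s
    using assms that unfolding mixed_stopping_time_def by simp
qed

lemma adapted_trading_strategy_Suc:
  assumes "trading_strategy T atoms y" "t < T"
  shows "adapted atoms t (y (Suc t))"
proof -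
  have "Suc t \<in> {1..T}"
    using assms(2) by simp
  then show ?thesis
    using assms(1) unfolding trading_strategy_def by fastforce
qed

locale american_market = market T atoms rate
  for T :: nat
    and atoms :: "nat \<Rightarrow> 'w set set"
    and rate :: "nat \<Rightarrow> 'w \<Rightarrow> 'd::finite \<Rightarrow> 'd \<Rightarrow> real" +
  fixes \<xi> :: "nat \<Rightarrow> 'w \<Rightarrow> real^'d"
  assumes american_option: "american_option T atoms \<xi>"
begin

abbreviation Z :: "nat \<Rightarrow> 'w set \<Rightarrow> (real^'d) set" where
  "Z \<equiv> Zbd T atoms rate \<xi>"

abbreviation U :: "nat \<Rightarrow> 'w set \<Rightarrow> (real^'d) set" where
  "U \<equiv> Ubd T atoms rate \<xi>"

definition Zbd_scaled :: "real \<Rightarrow> nat \<Rightarrow> 'w set \<Rightarrow> (real^'d) set" where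
  "Zbd_scaled c t \<mu> = (if 0 < c then (\<lambda>z. c *\<^sub>R z) ` Z t \<mu> else Q t \<mu>)"

lemma Ubd_eq:
  assumes "t \<le> T" "\<mu> \<in> atoms t" "w \<in> \<mu>"
  shows "U t \<mu> = (\<lambda>q. - \<xi> t w + q) ` Q t \<mu>"
proof -
  have "adapted atoms t (\<xi> t)"
    using american_option assms(1) unfolding american_option_def by simp
  then have "at_node (\<xi> t) \<mu> = \<xi> t w"
    using at_node_eq[OF assms(2) _ assms(3)] by blast
  then show ?thesis
    unfolding Ubd_def by simp
qed

lemma Zbd_last: "Z T \<mu> = U T \<mu>"
  by (simp add: Zbd_def)

lemma Zbd_Suc:
  assumes "t < T"
  shows "Z t \<mu> = convex hull (U t \<mu> \<union>
    {a + b | a b. a \<in> (\<Inter>\<nu>\<in>succ_nodes atoms t \<mu>. Z (Suc t) \<nu>) \<and> b \<in> Q t \<mu>})"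
proof -
  have "T - t = Suc (T - Suc t)"
    using assms by simp
  then show ?thesis
    by (simp add: Zbd_def Let_def)
qed

lemma Ubd_subset_Zbd: "t \<le> T \<Longrightarrow> U t \<mu> \<subseteq> Z t \<mu>"
proof (cases "t = T")
  case False
  moreover assume "t \<le> T"
  ultimately have "t < T"
    by simp
  have "U t \<mu> \<subseteq> U t \<mu> \<union> {a + b | a b. a \<in> (\<Inter>\<nu>\<in>succ_nodes atoms t \<mu>. Z (Suc t) \<nu>) \<and> b \<in> Q t \<mu>}"
    by blast
  also have "\<dots> \<subseteq> Z t \<mu>"
    unfolding Zbd_Suc[OF \<open>t < T\<close>] by (rule hull_subset)
  finally show ?thesis .
qed (simp add: Zbd_last)

lemma exercise_mem_Zbd_scaled:
  assumes "t \<le> T" "\<mu> \<in> atoms t" "w \<in> \<mu>" "0 \<le> a" "q \<in> Q t \<mu>"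
  shows "q - a *\<^sub>R \<xi> t w \<in> Zbd_scaled a t \<mu>"
proof (cases "a > 0")
  case True
  have "inverse a *\<^sub>R q \<in> Q t \<mu>"
    using Qnode_scaleR[OF assms(5)] True by simp
  then have "- \<xi> t w + inverse a *\<^sub>R q \<in> Z t \<mu>"
    using Ubd_subset_Zbd[OF assms(1)] Ubd_eq[OF assms(1-3)] by blast
  moreover have "q - a *\<^sub>R \<xi> t w = a *\<^sub>R (- \<xi> t w + inverse a *\<^sub>R q)"
    using True by (simp add: algebra_simps)
  ultimately show ?thesis
    unfolding Zbd_scaled_def if_P[OF True] by (rule rev_image_eqI)
next
  case False
  then show ?thesis
    using assms(4,5) by (simp add: Zbd_scaled_def)
qed

lemma Zbd_scaled_step:
  assumes "t < T" "\<mu> \<in> atoms t" "w \<in> \<mu>" "0 \<le> a" "0 \<le> c"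
    and succ: "\<forall>\<nu>\<in>succ_nodes atoms t \<mu>. x \<in> Zbd_scaled c (Suc t) \<nu>"
    and k: "k \<in> Kcone rate t w"
  shows "x + k - a *\<^sub>R \<xi> t w \<in> Zbd_scaled (a + c) t \<mu>"
proof (cases "c > 0")
  case False
  then have "c = 0" "\<forall>\<nu>\<in>succ_nodes atoms t \<mu>. x \<in> Q (Suc t) \<nu>"
    using assms(5) succ by (simp_all add: Zbd_scaled_def)
  then show ?thesis
    using exercise_mem_Zbd_scaled[OF _ assms(2-4) Qnode_add_Kcone[OF assms(1-3) _ k]] assms(1)
    by simp
next
  case True
  let ?W = "\<Inter>\<nu>\<in>succ_nodes atoms t \<mu>. Z (Suc t) \<nu>"
  define b where "b = inverse c *\<^sub>R x + inverse c *\<^sub>R k"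
  have t: "t \<le> T"
    using assms(1) by simp
  have "inverse c *\<^sub>R x \<in> ?W"
    using succ True unfolding Zbd_scaled_def by auto
  moreover have "inverse c *\<^sub>R k \<in> Q t \<mu>"
    using Kcone_subset_Qnode[OF t assms(2,3) Kcone_scaleR[OF k]] True by simp
  ultimately have b_mem: "b \<in> Z t \<mu>"
    unfolding Zbd_Suc[OF assms(1)] b_def by (blast intro: hull_inc)
  have u_mem: "- \<xi> t w \<in> Z t \<mu>"
    using Ubd_subset_Zbd[OF t] Ubd_eq[OF t assms(2,3)] zero_in_Qnode[OF t assms(2)] by force
  have ac: "a + c > 0"
    using assms(4) True by simp
  let ?p = "(a / (a + c)) *\<^sub>R (- \<xi> t w) + (c / (a + c)) *\<^sub>R b"
  have "?p \<in> Z t \<mu>"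
    using convexD[OF _ u_mem b_mem] Zbd_Suc[OF assms(1)] convex_convex_hull assms(4,5) ac
    by (simp add: add_divide_distrib[symmetric])
  moreover have "x + k - a *\<^sub>R \<xi> t w = (a + c) *\<^sub>R ?p"
  proof -
    have weights: "(a + c) * (a / (a + c)) = a" "(a + c) * (c / (a + c)) = c"
      using ac by simp_all
    have "(a + c) *\<^sub>R ?p = a *\<^sub>R (- \<xi> t w) + c *\<^sub>R b"
      by (simp only: scaleR_add_right scaleR_scaleR weights)
    also have "\<dots> = x + k - a *\<^sub>R \<xi> t w"
      using True by (simp add: b_def scaleR_add_right)
    finally show ?thesis
      by simp
  qed
  ultimately show ?thesis
    unfolding Zbd_scaled_def if_P[OF ac] by (rule rev_image_eqI)
qed

lemma Phi_bg_mem_Zbd_scaled_last: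
  assumes "Phi_bg T atoms rate \<xi> y ch" "\<mu> \<in> atoms T" "w \<in> \<mu>"
  shows "y T w \<in> Zbd_scaled (chi_star T ch T w) T \<mu>"
proof -
  have "y (Suc T) = (\<lambda>_. 0)" and ch: "0 \<le> ch T w"
    using assms(1) unfolding Phi_bg_def trading_strategy_def mixed_stopping_time_def by simp_all
  moreover have "y T w + ch T w *\<^sub>R \<xi> T w - y (Suc T) w \<in> Kcone rate T w"
    using assms(1) unfolding Phi_bg_def inK_def by simp
  ultimately have "y T w + ch T w *\<^sub>R \<xi> T w \<in> Q T \<mu>"
    using Kcone_subset_Qnode[OF order_refl assms(2,3)] by simp
  then have "y T w + ch T w *\<^sub>R \<xi> T w - ch T w *\<^sub>R \<xi> T w \<in> Zbd_scaled (ch T w) T \<mu>"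
    by (rule exercise_mem_Zbd_scaled[OF order_refl assms(2,3) ch])
  then show ?thesis
    by (simp add: chi_star_def)
qed

lemma Phi_bg_mem_Zbd_scaled_Suc:
  assumes "Phi_bg T atoms rate \<xi> y ch" "t < T" "\<mu> \<in> atoms t" "w \<in> \<mu>"
    and IH: "\<forall>\<nu>\<in>atoms (Suc t). \<forall>w\<in>\<nu>. y (Suc t) w \<in> Zbd_scaled (chi_star T ch (Suc t) w) (Suc t) \<nu>"
  shows "y t w \<in> Zbd_scaled (chi_star T ch t w) t \<mu>"
proof -
  have y: "trading_strategy T atoms y" and ch: "mixed_stopping_time T atoms ch"
    using assms(1) by (simp_all add: Phi_bg_def)
  have "0 \<le> ch t w" and K: "y t w + ch t w *\<^sub>R \<xi> t w - y (Suc t) w \<in> Kcone rate t w"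
    using assms(1,2) unfolding Phi_bg_def mixed_stopping_time_def inK_def by simp_all
  have succ: "\<forall>\<nu>\<in>succ_nodes atoms t \<mu>. y (Suc t) w \<in> Zbd_scaled (chi_star T ch (Suc t) w) (Suc t) \<nu>"
  proof
    fix \<nu> assume "\<nu> \<in> succ_nodes atoms t \<mu>"
    then have \<nu>: "\<nu> \<in> atoms (Suc t)" "\<nu> \<subseteq> \<mu>"
      by (auto simp: succ_nodes_def)
    obtain w' where "w' \<in> \<nu>"
      using atom_nonempty[OF _ \<nu>(1)] assms(2) by auto
    then have "y (Suc t) w' = y (Suc t) w" "chi_star T ch (Suc t) w' = chi_star T ch (Suc t) w"
      using adapted_trading_strategy_Suc[OF y assms(2)] adapted_chi_star_Suc[OF ch assms(2)]
        assms(3,4) \<nu>(2) unfolding adapted_def by blast+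
    with IH \<nu>(1) \<open>w' \<in> \<nu>\<close> show "y (Suc t) w \<in> Zbd_scaled (chi_star T ch (Suc t) w) (Suc t) \<nu>"
      by metis
  qed
  have "y (Suc t) w + (y t w + ch t w *\<^sub>R \<xi> t w - y (Suc t) w) - ch t w *\<^sub>R \<xi> t w
      \<in> Zbd_scaled (ch t w + chi_star T ch (Suc t) w) t \<mu>"
    by (rule Zbd_scaled_step[OF assms(2-4) \<open>0 \<le> ch t w\<close> chi_star_nonneg[OF ch] succ K])
  then show ?thesis
    using chi_star_Suc[OF assms(2), of ch w] by simp
qed

lemma Phi_bg_mem_Zbd_scaled:
  assumes "Phi_bg T atoms rate \<xi> y ch" "t \<le> T"
  shows "\<forall>\<mu>\<in>atoms t. \<forall>w\<in>\<mu>. y t w \<in> Zbd_scaled (chi_star T ch t w) t \<mu>"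
  using assms(2)
proof (induction t rule: inc_induct)
  case base
  show ?case
    using Phi_bg_mem_Zbd_scaled_last[OF assms(1)] by blast
next
  case (step t)
  then show ?case
    using Phi_bg_mem_Zbd_scaled_Suc[OF assms(1)] by simp
qed

end

theorem propositionA4:
  fixes T :: nat
    and atoms :: "nat \<Rightarrow> ('w::finite) set set"
    and P :: "'w \<Rightarrow> real"
    and rate :: "nat \<Rightarrow> 'w \<Rightarrow> 'd::finite \<Rightarrow> 'd \<Rightarrow> real"
    and \<xi> y :: "nat \<Rightarrow> 'w \<Rightarrow> real^'d"
    and ch :: "nat \<Rightarrow> 'w \<Rightarrow> real"
  assumes "filtration T atoms"
    and "\<forall>w. P w > 0" and "(\<Sum>w\<in>UNIV. P w) = 1"
    and "exchange_rates T atoms rate"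
    and "no_arbitrage T atoms rate"
    and "american_option T atoms \<xi>"
    and "Phi_bg T atoms rate \<xi> y ch"
  shows "\<forall>t\<le>T. \<forall>\<mu>\<in>atoms t. \<forall>w\<in>\<mu>.
           (chi_star T ch t w > 0 \<longrightarrow>
              y t w \<in> (\<lambda>z. chi_star T ch t w *\<^sub>R z) ` Zbd T atoms rate \<xi> t \<mu>) \<and>
           (chi_star T ch t w = 0 \<longrightarrow> y t w \<in> Qnode T atoms rate t \<mu>)"
proof (intro allI impI ballI)
  fix t \<mu> w assume "t \<le> T" "\<mu> \<in> atoms t" "w \<in> \<mu>"
  interpret american_market T atoms rate \<xi>
    by (intro american_market.intro market.intro american_market_axioms.intro assms(1,4,6))
  have "y t w \<in> Zbd_scaled (chi_star T ch t w) t \<mu>"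
    using Phi_bg_mem_Zbd_scaled[OF assms(7) \<open>t \<le> T\<close>] \<open>\<mu> \<in> atoms t\<close> \<open>w \<in> \<mu>\<close> by blast
  then show "(chi_star T ch t w > 0 \<longrightarrow>
        y t w \<in> (\<lambda>z. chi_star T ch t w *\<^sub>R z) ` Zbd T atoms rate \<xi> t \<mu>) \<and>
      (chi_star T ch t w = 0 \<longrightarrow> y t w \<in> Qnode T atoms rate t \<mu>)"
    unfolding Zbd_scaled_def by (simp split: if_split_asm)
qed

end
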